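(* Let $n\ge4$, let $C=\mathrm{circ}(1,0,\ldots,0,1)$ of order $n-1$, let $X=2(CC^T+I_{n-1})^{-1}\left[ (n-1)I_{n-1}-J_{n-1}\right]$ and $Y=J_{n-1}+C^TX$. Then $Y=\mathrm{circ}(d_0,d_1,\ldots,d_{n-2})$ where \[d_0=\frac{1}{5}+\frac{4(n-1)}{\sqrt{5}}\left[\frac{2^{n-2}+(-3+\sqrt{5})^{n-2}}{2^{n-1}-(-3+\sqrt{5})^{n-1}} -\frac{2^{n-2}+(-3-\sqrt{5})^{n-2}}{2^{n-1}-(-3-\sqrt{5})^{n-1}}\right]\] and for $j=1,2,\ldots,n-2$, \[d_j=\frac{1}{5}+\frac{2^{n+1-j}(n-1)}{5+\sqrt{5}}\left[\frac{2(-3+\sqrt{5})^{j-1}}{2^{n-1}-(-3+\sqrt{5})^{n-1}} -\frac{(-3-\sqrt{5})^{j}}{2^{n-1}-(-3-\sqrt{5})^{n-1}}\right].\]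
   Context: For $c_0,\dots,c_{k-1}$, $\mathrm{circ}(c_0,\ldots,c_{k-1})$ denotes the $k\times k$ circulant matrix whose $(i,j)$-entry is $c_{(j-i)\bmod k}$. $J_{n-1}$ is the $(n-1)\times(n-1)$ all-ones matrix and $I_{n-1}$ the identity. Note $CC^T+I_{n-1}=\mathrm{circ}(3,1,0,\ldots,0,1)$ is invertible. ($X,Y$ are blocks of the Moore–Penrose inverse of the incidence matrix of the wheel graph $W_n$.) *)

theory Defs
  imports Complex_Main "Jordan_Normal_Form.Gauss_Jordan_Elimination"
begin

definition circ :: "nat \<Rightarrow> (nat \<Rightarrow> 'a) \<Rightarrow> 'a mat" where
  "circ k c = mat k k (\<lambda>(i, j). c ((j + k - i) mod k))"

definition ones_mat :: "nat \<Rightarrow> 'a :: one mat" where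
  "ones_mat k = mat k k (\<lambda>_. 1)"

end

theory Submission
  imports Defs "Jordan_Normal_Form.Determinant"
begin

(* With m = n - 1, C C^T + I is circ(3,1,0,...,0,1), so multiplying a circulant circ f by it
   applies the cyclic recurrence f(t-1) + 3 f(t) + f(t+1).  The roots of x^2 + 3x + 1 are
   rho = (sqrt 5 - 3)/2 and 1/rho, and the symmetric solution rho^t + rho^(m-t), normalised,
   has right-hand side the Kronecker delta at 0: this gives the first row of (C C^T + I)^-1
   and shows X = circ x with x_t = 2m (rho^t + rho^(m-t)) / (sqrt 5 (1 - rho^m)) - 2/5.
   Then Y = J + C^T X = circ (1 + x_t + x_(t-1)), and writing -3 + sqrt 5 = 2 rho and
   -3 - sqrt 5 = 2/rho turns this into the stated closed forms. *)

(* Cyclic index arithmetic is done in int, where subtraction does not truncate. *)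
lemma of_nat_mod_cyclic_sub:
  assumes "b < k"
  shows "int ((a + k - b) mod k) = (int a - int b) mod int k"
proof -
  have "int ((a + k - b) mod k) = (int a - int b + int k) mod int k"
    using assms by (simp add: of_nat_mod of_nat_diff algebra_simps)
  then show ?thesis by simp
qed

lemma of_nat_mod_cyclic_neg:
  assumes "b < k"
  shows "int ((k - b) mod k) = (- int b) mod int k"
  using of_nat_mod_cyclic_sub[OF assms, of 0] by simp

lemma cyclic_pred_pos:
  fixes t m :: nat
  assumes "0 < t" "t < m"
  shows "(t + m - 1) mod m = t - 1"
proof -
  obtain s where "t = Suc s" using assms(1) by (cases t) auto
  then show ?thesis using assms by simp
qed

lemma circ_carrier_mat [simp]: "circ k c \<in> carrier_mat k k"
  and dim_row_circ [simp]: "dim_row (circ k c) = k"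
  and dim_col_circ [simp]: "dim_col (circ k c) = k"
  unfolding circ_def by simp_all

lemma index_circ [simp]: "i < k \<Longrightarrow> j < k \<Longrightarrow> circ k c $$ (i, j) = c ((j + k - i) mod k)"
  unfolding circ_def by simp

lemma circ_cong: "(\<And>t. t < k \<Longrightarrow> f t = g t) \<Longrightarrow> circ k f = circ k g"
  by (rule eq_matI) auto

lemma circ_add: "circ k f + circ k g = circ k (\<lambda>t. f t + g t)"
  by (rule eq_matI) auto

lemma circ_diff: "circ k f - circ k g = circ k (\<lambda>t. f t - g t)"
  by (rule eq_matI) auto

lemma smult_circ: "a \<cdot>\<^sub>m circ k f = circ k (\<lambda>t. a * f t)"
  by (rule eq_matI) auto

lemma one_mat_circ: "1\<^sub>m k = circ k (\<lambda>t. if t = 0 then 1 else 0)"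
proof (rule eq_matI)
  fix i j assume "i < dim_row (circ k (\<lambda>t. if t = 0 then 1 else 0))"
    "j < dim_col (circ k (\<lambda>t. if t = 0 then 1 else 0))"
  then have ij: "i < k" "j < k" by simp_all
  have "(j + k - i) mod k = 0 \<longleftrightarrow> i = j"
  proof (cases "i \<le> j")
    case True
    then have "(j + k - i) mod k = j - i"
      using ij by (metis Nat.add_diff_assoc2 mod_add_self2 mod_less less_imp_diff_less)
    then show ?thesis using True by auto
  next
    case False
    then show ?thesis using ij by simp
  qed
  then show "1\<^sub>m k $$ (i, j) = circ k (\<lambda>t. if t = 0 then 1 else 0) $$ (i, j)"
    using ij by simp
qed auto

lemma ones_mat_circ: "ones_mat k = circ k (\<lambda>_. 1)"
  unfolding ones_mat_def by (rule eq_matI) auto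

lemma circ_mult:
  "circ k a * circ k b = circ k (\<lambda>t. \<Sum>s<k. a s * b ((t + k - s) mod k))"
proof (rule eq_matI)
  fix i j assume "i < dim_row (circ k (\<lambda>t. \<Sum>s<k. a s * b ((t + k - s) mod k)))"
    "j < dim_col (circ k (\<lambda>t. \<Sum>s<k. a s * b ((t + k - s) mod k)))"
  then have i: "i < k" and j: "j < k" by simp_all
  have "(circ k a * circ k b) $$ (i, j) = (\<Sum>l<k. a ((l + k - i) mod k) * b ((j + k - l) mod k))"
    using i j by (simp add: scalar_prod_def lessThan_atLeast0)
  also have "\<dots> = (\<Sum>s<k. a s * b (((j + k - i) mod k + k - s) mod k))"
  proof (rule sum.reindex_bij_witness[where i = "\<lambda>s. (s + i) mod k" and j = "\<lambda>l. (l + k - i) mod k"])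
    fix l assume "l \<in> {..<k}"
    then have l: "l < k" by simp
    have "int (((l + k - i) mod k + i) mod k) = int l"
      using l i by (simp add: of_nat_mod of_nat_mod_cyclic_sub mod_simps)
    then show "((l + k - i) mod k + i) mod k = l" by (simp only: of_nat_eq_iff)
    show "(l + k - i) mod k \<in> {..<k}" using l by simp
    have "(l + k - i) mod k < k" using l by simp
    then have "int (((j + k - i) mod k + k - (l + k - i) mod k) mod k) = int ((j + k - l) mod k)"
      using i l by (simp only: of_nat_mod_cyclic_sub) (simp add: mod_simps)
    then show "a ((l + k - i) mod k) * b (((j + k - i) mod k + k - (l + k - i) mod k) mod k)
        = a ((l + k - i) mod k) * b ((j + k - l) mod k)"
      by (simp only: of_nat_eq_iff)
  next
    fix s assume "s \<in> {..<k}"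
    then have s: "s < k" by simp
    have "int (((s + i) mod k + k - i) mod k) = int s"
      using s i by (simp only: of_nat_mod_cyclic_sub) (simp add: of_nat_mod mod_simps)
    then show "((s + i) mod k + k - i) mod k = s" by (simp only: of_nat_eq_iff)
    show "(s + i) mod k \<in> {..<k}" using s by simp
  qed
  finally show "(circ k a * circ k b) $$ (i, j) = circ k (\<lambda>t. \<Sum>s<k. a s * b ((t + k - s) mod k)) $$ (i, j)"
    using i j by simp
qed auto

lemma transpose_circ: "(circ k c)\<^sup>T = circ k (\<lambda>t. c ((k - t) mod k))"
proof (rule eq_matI)
  fix i j assume "i < dim_row (circ k (\<lambda>t. c ((k - t) mod k)))"
    "j < dim_col (circ k (\<lambda>t. c ((k - t) mod k)))"
  then have i: "i < k" and j: "j < k" by simp_all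
  have "(j + k - i) mod k < k" using i by simp
  then have "int ((i + k - j) mod k) = int ((k - (j + k - i) mod k) mod k)"
    using i j by (simp only: of_nat_mod_cyclic_sub of_nat_mod_cyclic_neg) (simp add: mod_simps)
  then show "(circ k c)\<^sup>T $$ (i, j) = circ k (\<lambda>t. c ((k - t) mod k)) $$ (i, j)"
    using i j by (simp only: of_nat_eq_iff) simp
qed auto

lemma sum_two_points:
  fixes g :: "nat \<Rightarrow> 'a :: semiring_1"
  assumes "a < k" "b < k" "a \<noteq> b"
  shows "(\<Sum>s<k. (if s = a \<or> s = b then 1 else 0) * g s) = g a + g b"
proof -
  have "(\<Sum>s<k. (if s = a \<or> s = b then 1 else 0) * g s)
      = (\<Sum>s<k. (if s = a then g s else 0) + (if s = b then g s else 0))"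
    by (rule sum.cong) (use assms in auto)
  also have "\<dots> = g a + g b"
    using assms by (simp add: sum.distrib)
  finally show ?thesis .
qed

lemma circ_two_point_mult:
  fixes f :: "nat \<Rightarrow> 'a :: comm_semiring_1"
  assumes "0 < p" "p < k"
  shows "circ k (\<lambda>s. if s = 0 \<or> s = p then 1 else 0) * circ k f
       = circ k (\<lambda>t. f t + f ((t + k - p) mod k))"
  unfolding circ_mult
proof (rule circ_cong)
  fix t assume "t < k"
  have "(\<Sum>s<k. (if s = 0 \<or> s = p then 1 else 0) * f ((t + k - s) mod k))
      = f ((t + k - 0) mod k) + f ((t + k - p) mod k)"
    by (rule sum_two_points) (use assms in auto)
  then show "(\<Sum>s<k. (if s = 0 \<or> s = p then 1 else 0) * f ((t + k - s) mod k))
      = f t + f ((t + k - p) mod k)"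
    using \<open>t < k\<close> by simp
qed

lemma transpose_circ_two_point:
  assumes "0 < p" "p < k"
  shows "(circ k (\<lambda>s. if s = 0 \<or> s = p then 1 else 0))\<^sup>T
       = circ k (\<lambda>s. if s = 0 \<or> s = k - p then 1 else 0)"
  unfolding transpose_circ
proof (rule circ_cong)
  fix t assume "t < k"
  then have "(k - t) mod k = 0 \<longleftrightarrow> t = 0" and "(k - t) mod k = p \<longleftrightarrow> t = k - p"
    using assms by (cases "t = 0"; auto)+
  then show "(if (k - t) mod k = 0 \<or> (k - t) mod k = p then 1 else 0)
      = (if t = 0 \<or> t = k - p then 1 else 0)"
    by simp
qed

definition cycle_mat :: "nat \<Rightarrow> 'a :: {zero, one} mat" where
  "cycle_mat k = circ k (\<lambda>s. if s = 0 \<or> s = k - 1 then 1 else 0)"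

lemma cycle_mat_carrier_mat [simp]: "cycle_mat k \<in> carrier_mat k k"
  by (simp add: cycle_mat_def)

lemma cycle_mat_mult_circ:
  fixes f :: "nat \<Rightarrow> 'a :: comm_semiring_1"
  assumes "2 \<le> k"
  shows "cycle_mat k * circ k f = circ k (\<lambda>t. f t + f ((t + 1) mod k))"
  using circ_two_point_mult[of "k - 1" k f] assms by (simp add: cycle_mat_def)

lemma transpose_cycle_mat_mult_circ:
  fixes f :: "nat \<Rightarrow> 'a :: comm_semiring_1"
  assumes "2 \<le> k"
  shows "(cycle_mat k)\<^sup>T * circ k f = circ k (\<lambda>t. f t + f ((t + k - 1) mod k))"
proof -
  have "(cycle_mat k :: 'a mat)\<^sup>T = circ k (\<lambda>s. if s = 0 \<or> s = 1 then 1 else 0)"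
    using assms transpose_circ_two_point[of "k - 1" k] by (simp add: cycle_mat_def)
  then show ?thesis using assms circ_two_point_mult[of 1 k f] by simp
qed

lemma cycle_gram_mult_circ:
  fixes f :: "nat \<Rightarrow> 'a :: comm_ring_1"
  assumes "2 \<le> k"
  shows "(cycle_mat k * (cycle_mat k)\<^sup>T + 1\<^sub>m k) * circ k f
       = circ k (\<lambda>t. f ((t + k - 1) mod k) + 3 * f t + f ((t + 1) mod k))"
proof -
  have "(cycle_mat k * (cycle_mat k)\<^sup>T + 1\<^sub>m k) * circ k f
      = cycle_mat k * (cycle_mat k)\<^sup>T * circ k f + 1\<^sub>m k * circ k f"
    by (rule add_mult_distrib_mat[of _ k k])
      (auto intro: mult_carrier_mat[of _ k k _ k] simp: transpose_carrier_mat)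
  also have "\<dots> = cycle_mat k * ((cycle_mat k)\<^sup>T * circ k f) + circ k f"
    by (subst assoc_mult_mat[of _ k k _ k _ k]) auto
  also have "\<dots> = circ k (\<lambda>t. f ((t + k - 1) mod k) + 3 * f t + f ((t + 1) mod k))"
    unfolding transpose_cycle_mat_mult_circ[OF assms] cycle_mat_mult_circ[OF assms] circ_add
  proof (rule circ_cong)
    fix t assume "t < k"
    have "int (((t + 1) mod k + k - 1) mod k) = int t"
      using \<open>t < k\<close> assms by (simp only: of_nat_mod_cyclic_sub) (simp add: of_nat_mod mod_simps)
    then have "((t + 1) mod k + k - 1) mod k = t" by (simp only: of_nat_eq_iff)
    then show "f t + f ((t + k - 1) mod k) + (f ((t + 1) mod k) + f (((t + 1) mod k + k - 1) mod k)) + f t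
        = f ((t + k - 1) mod k) + 3 * f t + f ((t + 1) mod k)"
      by (simp add: algebra_simps numeral_3_eq_3)
  qed
  finally show ?thesis .
qed

lemma the_mat_inverse_eqI:
  fixes A :: "'a :: field mat"
  assumes A: "A \<in> carrier_mat k k" and B: "B \<in> carrier_mat k k" and AB: "A * B = 1\<^sub>m k"
  shows "the (mat_inverse A) = B"
proof -
  have "B * A = 1\<^sub>m k" using mat_mult_left_right_inverse[OF A B AB] .
  then have "A \<in> Units (ring_mat TYPE('a) k ())"
    using A B AB unfolding Units_def ring_mat_def by auto
  then have "mat_inverse A \<noteq> None" using mat_inverse(1)[OF A, of "()"] by auto
  then obtain Ai where Ai: "mat_inverse A = Some Ai" by blast
  then have "Ai * A = 1\<^sub>m k" "Ai \<in> carrier_mat k k" using mat_inverse(2)[OF A] by auto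
  then have "Ai = Ai * (A * B)" by (simp add: AB)
  also have "\<dots> = B" using \<open>Ai * A = 1\<^sub>m k\<close> \<open>Ai \<in> carrier_mat k k\<close> A B
    by (simp add: assoc_mult_mat[of Ai k k A k B k, symmetric])
  finally show ?thesis by (simp add: Ai)
qed

lemma reciprocal_quotients_diff:
  fixes r :: "'a :: field_char_0"
  assumes "r \<noteq> 0" "r ^ m \<noteq> 1" "0 < m"
  shows "(2 ^ (m - 1) + (2 * r) ^ (m - 1)) / (2 ^ m - (2 * r) ^ m)
       - (2 ^ (m - 1) + (2 / r) ^ (m - 1)) / (2 ^ m - (2 / r) ^ m)
       = (1 + r) * (r ^ (m - 1) + 1) / (2 * (1 - r ^ m))"
proof -
  obtain p where m: "m = Suc p" using assms(3) by (cases m) auto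
  define P where "P = r ^ p"
  have "P \<noteq> 0" using assms(1) by (simp add: P_def)
  have "1 - P * r \<noteq> 0" "P * r - 1 \<noteq> 0" using assms(2) by (auto simp: P_def m mult.commute)
  have first: "(2 ^ p + (2 * r) ^ p) / (2 ^ Suc p - (2 * r) ^ Suc p) = (1 + P) / (2 * (1 - P * r))"
    using \<open>1 - P * r \<noteq> 0\<close> by (simp add: P_def power_mult_distrib field_simps)
  have second: "(2 ^ p + (2 / r) ^ p) / (2 ^ Suc p - (2 / r) ^ Suc p) = - (r + P * r) / (2 * (1 - P * r))"
    using assms(1) \<open>P \<noteq> 0\<close> \<open>1 - P * r \<noteq> 0\<close> \<open>P * r - 1 \<noteq> 0\<close>
    by (simp add: P_def power_divide field_simps)
  have pow: "r ^ Suc p = P * r" by (simp add: P_def mult.commute)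
  show ?thesis
    unfolding m diff_Suc_1 first second pow P_def[symmetric] diff_divide_distrib[symmetric]
    by (simp add: algebra_simps)
qed

lemma reciprocal_quotients_diff_shifted:
  fixes r :: "'a :: field_char_0"
  assumes "r \<noteq> 0" "r ^ m \<noteq> 1" "0 < j" "j < m"
  shows "2 ^ (m + 2 - j) * (2 * (2 * r) ^ (j - 1) / (2 ^ m - (2 * r) ^ m)
       - (2 / r) ^ j / (2 ^ m - (2 / r) ^ m))
       = 4 * (r ^ (j - 1) + r ^ (m - j)) / (1 - r ^ m)"
proof -
  obtain i where j: "j = Suc i" using assms(3) by (cases j) auto
  define e where "e = m - j"
  have m: "m = Suc (i + e)" using assms(4) j by (simp add: e_def)
  define K where "K = r ^ i"
  define E where "E = r ^ e"
  have "K \<noteq> 0" "E \<noteq> 0" using assms(1) by (simp_all add: K_def E_def)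
  have pow: "r ^ Suc (i + e) = K * E * r" by (simp add: K_def E_def power_add mult_ac)
  have "1 - K * E * r \<noteq> 0" "K * E * r - 1 \<noteq> 0" using assms(2) unfolding m pow by auto
  have first: "2 * (2 * r) ^ i / (2 ^ Suc (i + e) - (2 * r) ^ Suc (i + e))
      = K / (2 ^ e * (1 - K * E * r))"
    using \<open>1 - K * E * r \<noteq> 0\<close> by (simp add: K_def E_def power_mult_distrib power_add field_simps)
  have second: "(2 / r) ^ Suc i / (2 ^ Suc (i + e) - (2 / r) ^ Suc (i + e))
      = - E / (2 ^ e * (1 - K * E * r))"
    using assms(1) \<open>K \<noteq> 0\<close> \<open>E \<noteq> 0\<close> \<open>1 - K * E * r \<noteq> 0\<close> \<open>K * E * r - 1 \<noteq> 0\<close>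
    by (simp add: K_def E_def power_divide power_add field_simps)
  have exps: "m + 2 - j = e + 2" "m - j = e" using m j by simp_all
  show ?thesis
    unfolding exps unfolding j diff_Suc_1 m first second pow K_def[symmetric] E_def[symmetric]
      diff_divide_distrib[symmetric]
    using \<open>1 - K * E * r \<noteq> 0\<close> by (simp add: power_add field_simps)
qed

definition rho :: real where "rho = (sqrt 5 - 3) / 2"

lemma rho_quadratic: "rho\<^sup>2 + 3 * rho + 1 = 0"
  unfolding rho_def power2_eq_square by (simp add: field_simps)

lemma rho_bounds: "-1 < rho" "rho < 0"
proof -
  have "2 < sqrt (5::real)" by (simp add: real_less_rsqrt)
  moreover have "sqrt (5::real) < 3" by (simp add: real_less_lsqrt)
  ultimately show "-1 < rho" "rho < 0" unfolding rho_def by auto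
qed

lemma rho_pow_neq_1:
  assumes "0 < m"
  shows "rho ^ m \<noteq> 1"
proof -
  have "\<bar>rho\<bar> ^ m < 1" using power_strict_mono[of "\<bar>rho\<bar>" 1 m] rho_bounds assms by auto
  then show ?thesis by (metis abs_one power_abs less_irrefl)
qed

lemma rho_pow_recurrence: "rho ^ s + 3 * rho ^ Suc s + rho ^ Suc (Suc s) = 0"
proof -
  have "rho ^ s + 3 * rho ^ Suc s + rho ^ Suc (Suc s) = rho ^ s * (rho\<^sup>2 + 3 * rho + 1)"
    by (simp add: algebra_simps power2_eq_square)
  then show ?thesis by (simp add: rho_quadratic)
qed

lemma minus_3_plus_sqrt_5: "-3 + sqrt 5 = 2 * rho"
  unfolding rho_def by simp

lemma minus_3_minus_sqrt_5: "-3 - sqrt 5 = 2 / rho"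
  using rho_bounds unfolding rho_def by (simp add: field_simps)

lemma four_div_5_plus_sqrt_5: "4 / (5 + sqrt 5) = 2 * (1 + rho) / sqrt 5"
proof -
  have "0 < 5 + sqrt (5::real)" by (simp add: add_pos_nonneg)
  then show ?thesis unfolding rho_def by (simp add: field_simps)
qed

definition sym_pow :: "nat \<Rightarrow> nat \<Rightarrow> real" where
  "sym_pow m t = rho ^ t + rho ^ (m - t)"

lemma sym_pow_recurrence:
  assumes "0 < t" "t < m"
  shows "sym_pow m (t - 1) + 3 * sym_pow m t + sym_pow m (t + 1) = 0"
proof -
  obtain s where t: "t = Suc s" using assms(1) by (cases t) auto
  obtain u where m: "m = Suc s + Suc u" using assms(2) t by (metis add_Suc_right less_imp_Suc_add)
  have "sym_pow m (t - 1) + 3 * sym_pow m t + sym_pow m (t + 1)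
      = (rho ^ s + 3 * rho ^ Suc s + rho ^ Suc (Suc s)) + (rho ^ u + 3 * rho ^ Suc u + rho ^ Suc (Suc u))"
    unfolding sym_pow_def t m by (simp add: Suc_diff_le algebra_simps)
  then show ?thesis by (simp only: rho_pow_recurrence)
qed

lemma sym_pow_recurrence_0:
  assumes "2 \<le> m"
  shows "sym_pow m (m - 1) + 3 * sym_pow m 0 + sym_pow m 1 = sqrt 5 * (1 - rho ^ m)"
proof -
  obtain p where m: "m = Suc p" using assms by (cases m) auto
  have sum: "sym_pow m (m - 1) + 3 * sym_pow m 0 + sym_pow m 1
      = (2 * rho + 3) + rho ^ p * (2 + 3 * rho)"
    using assms unfolding sym_pow_def m by (simp add: algebra_simps)
  have "2 * rho + 3 = sqrt 5" "2 + 3 * rho = - sqrt 5 * rho"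
    unfolding rho_def by (simp_all add: field_simps)
  then show ?thesis unfolding sum by (simp add: m algebra_simps)
qed

lemma sym_pow_cyclic_recurrence:
  assumes "2 \<le> m" "t < m"
  shows "sym_pow m ((t + m - 1) mod m) + 3 * sym_pow m t + sym_pow m ((t + 1) mod m)
       = (if t = 0 then sqrt 5 * (1 - rho ^ m) else 0)"
proof (cases "t = 0")
  case True
  then show ?thesis using sym_pow_recurrence_0[OF assms(1)] assms by simp
next
  case False
  then have "(t + m - 1) mod m = t - 1" using assms cyclic_pred_pos by blast
  moreover have "sym_pow m ((t + 1) mod m) = sym_pow m (t + 1)"
    using assms by (cases "t + 1 = m") (simp_all add: sym_pow_def)
  ultimately show ?thesis using sym_pow_recurrence[of t m] False assms by simp
qed

definition inv_coeff :: "nat \<Rightarrow> nat \<Rightarrow> real" where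
  "inv_coeff m t = sym_pow m t / (sqrt 5 * (1 - rho ^ m))"

definition X_coeff :: "nat \<Rightarrow> nat \<Rightarrow> real" where
  "X_coeff m t = 2 * real m * inv_coeff m t - 2 / 5"

lemma inv_coeff_cyclic_recurrence:
  assumes "2 \<le> m" "t < m"
  shows "inv_coeff m ((t + m - 1) mod m) + 3 * inv_coeff m t + inv_coeff m ((t + 1) mod m)
       = (if t = 0 then 1 else 0)"
  using sym_pow_cyclic_recurrence[OF assms] rho_pow_neq_1[of m] assms
  by (simp add: inv_coeff_def add_divide_distrib[symmetric])

lemma X_coeff_cyclic_recurrence:
  assumes "2 \<le> m" "t < m"
  shows "X_coeff m ((t + m - 1) mod m) + 3 * X_coeff m t + X_coeff m ((t + 1) mod m)
       = 2 * (real m * (if t = 0 then 1 else 0) - 1)"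
proof -
  have "X_coeff m ((t + m - 1) mod m) + 3 * X_coeff m t + X_coeff m ((t + 1) mod m)
      = 2 * real m * (inv_coeff m ((t + m - 1) mod m) + 3 * inv_coeff m t
          + inv_coeff m ((t + 1) mod m)) - 2"
    by (simp add: X_coeff_def algebra_simps)
  also have "\<dots> = 2 * (real m * (if t = 0 then 1 else 0) - 1)"
    unfolding inv_coeff_cyclic_recurrence[OF assms] by (simp add: algebra_simps)
  finally show ?thesis .
qed

lemma X_coeff_adjacent_sum:
  assumes "0 < j" "j \<le> m"
  shows "1 + X_coeff m j + X_coeff m (j - 1)
       = 1/5 + 2 * real m * (1 + rho) * (rho ^ (j - 1) + rho ^ (m - j)) / (sqrt 5 * (1 - rho ^ m))"
proof -
  obtain i where j: "j = Suc i" using assms(1) by (cases j) auto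
  have "1 + X_coeff m j + X_coeff m (j - 1)
      = 1/5 + 2 * real m * (sym_pow m j + sym_pow m (j - 1)) / (sqrt 5 * (1 - rho ^ m))"
    by (simp add: X_coeff_def inv_coeff_def add_divide_distrib algebra_simps)
  also have "sym_pow m j + sym_pow m (j - 1) = (1 + rho) * (rho ^ (j - 1) + rho ^ (m - j))"
    using assms unfolding sym_pow_def j by (simp add: Suc_diff_Suc[symmetric] algebra_simps)
  finally show ?thesis by (simp add: mult.assoc)
qed

lemma X_coeff_m: "X_coeff m m = X_coeff m 0"
  by (simp add: X_coeff_def inv_coeff_def sym_pow_def add.commute)

lemma closed_form_entry_0:
  assumes "2 \<le> m"
  shows "1/5 + 4 * real m / sqrt 5 *
      ((2 ^ (m - 1) + (-3 + sqrt 5) ^ (m - 1)) / (2 ^ m - (-3 + sqrt 5) ^ m)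
       - (2 ^ (m - 1) + (-3 - sqrt 5) ^ (m - 1)) / (2 ^ m - (-3 - sqrt 5) ^ m))
    = 1 + X_coeff m 0 + X_coeff m (m - 1)"
proof -
  have "rho \<noteq> 0" "rho ^ m \<noteq> 1" "0 < m" using rho_bounds rho_pow_neq_1[of m] assms by auto
  have rearrange: "4 * real m / sqrt 5 * ((1 + rho) * (rho ^ (m - 1) + 1) / (2 * (1 - rho ^ m)))
      = 2 * real m * (1 + rho) * (rho ^ (m - 1) + rho ^ (m - m)) / (sqrt 5 * (1 - rho ^ m))"
    by (simp add: field_split_simps)
  have "1/5 + 4 * real m / sqrt 5 *
      ((2 ^ (m - 1) + (-3 + sqrt 5) ^ (m - 1)) / (2 ^ m - (-3 + sqrt 5) ^ m)
       - (2 ^ (m - 1) + (-3 - sqrt 5) ^ (m - 1)) / (2 ^ m - (-3 - sqrt 5) ^ m))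
    = 1/5 + 2 * real m * (1 + rho) * (rho ^ (m - 1) + rho ^ (m - m)) / (sqrt 5 * (1 - rho ^ m))"
    unfolding minus_3_plus_sqrt_5 minus_3_minus_sqrt_5 rearrange[symmetric]
      reciprocal_quotients_diff[OF \<open>rho \<noteq> 0\<close> \<open>rho ^ m \<noteq> 1\<close> \<open>0 < m\<close>] ..
  also have "\<dots> = 1 + X_coeff m m + X_coeff m (m - 1)"
    using X_coeff_adjacent_sum[of m m] assms by simp
  finally show ?thesis by (simp only: X_coeff_m)
qed

lemma closed_form_entry:
  assumes "0 < j" "j < m"
  shows "1/5 + 2 ^ (m + 2 - j) * real m / (5 + sqrt 5) *
      (2 * (-3 + sqrt 5) ^ (j - 1) / (2 ^ m - (-3 + sqrt 5) ^ m)
       - (-3 - sqrt 5) ^ j / (2 ^ m - (-3 - sqrt 5) ^ m))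
    = 1 + X_coeff m j + X_coeff m (j - 1)"
proof -
  have "rho \<noteq> 0" "rho ^ m \<noteq> 1" using rho_bounds rho_pow_neq_1[of m] assms by auto
  have "2 ^ (m + 2 - j) * real m / (5 + sqrt 5) *
      (2 * (-3 + sqrt 5) ^ (j - 1) / (2 ^ m - (-3 + sqrt 5) ^ m)
       - (-3 - sqrt 5) ^ j / (2 ^ m - (-3 - sqrt 5) ^ m))
    = real m / (5 + sqrt 5) * (2 ^ (m + 2 - j) *
      (2 * (2 * rho) ^ (j - 1) / (2 ^ m - (2 * rho) ^ m)
       - (2 / rho) ^ j / (2 ^ m - (2 / rho) ^ m)))"
    unfolding minus_3_plus_sqrt_5 minus_3_minus_sqrt_5 by (simp add: mult_ac)
  also have "\<dots> = real m * (4 / (5 + sqrt 5)) * (rho ^ (j - 1) + rho ^ (m - j)) / (1 - rho ^ m)"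
    unfolding reciprocal_quotients_diff_shifted[OF \<open>rho \<noteq> 0\<close> \<open>rho ^ m \<noteq> 1\<close> assms] by simp
  also have "\<dots> = 2 * real m * (1 + rho) * (rho ^ (j - 1) + rho ^ (m - j)) / (sqrt 5 * (1 - rho ^ m))"
    unfolding four_div_5_plus_sqrt_5 by simp
  finally show ?thesis using X_coeff_adjacent_sum[of j m] assms by simp
qed

lemma cycle_gram_mult_inv_coeff:
  assumes "2 \<le> m"
  shows "(cycle_mat m * (cycle_mat m)\<^sup>T + 1\<^sub>m m) * circ m (inv_coeff m) = 1\<^sub>m m"
  unfolding cycle_gram_mult_circ[OF assms] unfolding one_mat_circ
  using inv_coeff_cyclic_recurrence assms by (intro circ_cong) simp

lemma cycle_gram_inverse_mult:
  assumes "2 \<le> m"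
  shows "2 \<cdot>\<^sub>m (the (mat_inverse (cycle_mat m * (cycle_mat m)\<^sup>T + 1\<^sub>m m))
           * (real m \<cdot>\<^sub>m 1\<^sub>m m - ones_mat m)) = circ m (X_coeff m)"
proof -
  define G :: "real mat" where "G = cycle_mat m * (cycle_mat m)\<^sup>T + 1\<^sub>m m"
  have G: "G \<in> carrier_mat m m" unfolding G_def by (auto intro: mult_carrier_mat)
  have G_inv: "G * circ m (inv_coeff m) = 1\<^sub>m m"
    unfolding G_def using cycle_gram_mult_inv_coeff[OF assms] .
  then have inv_G: "circ m (inv_coeff m) * G = 1\<^sub>m m"
    using mat_mult_left_right_inverse[OF G] by simp
  have G_X: "G * circ m (X_coeff m) = 2 \<cdot>\<^sub>m (real m \<cdot>\<^sub>m 1\<^sub>m m - ones_mat m)"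
    unfolding G_def cycle_gram_mult_circ[OF assms]
    unfolding one_mat_circ ones_mat_circ smult_circ circ_diff
    using X_coeff_cyclic_recurrence assms by (intro circ_cong) simp
  have "2 \<cdot>\<^sub>m (the (mat_inverse G) * (real m \<cdot>\<^sub>m 1\<^sub>m m - ones_mat m))
      = circ m (inv_coeff m) * (2 \<cdot>\<^sub>m (real m \<cdot>\<^sub>m 1\<^sub>m m - ones_mat m))"
    unfolding the_mat_inverse_eqI[OF G circ_carrier_mat G_inv]
    by (rule mult_smult_distrib[symmetric]) (auto simp: ones_mat_def)
  also have "\<dots> = circ m (X_coeff m)"
    unfolding G_X[symmetric] using G
    by (simp add: assoc_mult_mat[of _ m m G m _ m, symmetric] inv_G)
  finally show ?thesis unfolding G_def .
qed

theorem mainTheorem4: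
  fixes n :: nat
  assumes "n \<ge> 4"
  defines "C \<equiv> circ (n - 1) (\<lambda>i. if i = 0 \<or> i = n - 2 then 1 else (0::real))"
  defines "X \<equiv> 2 \<cdot>\<^sub>m (the (mat_inverse (C * C\<^sup>T + 1\<^sub>m (n - 1))) *
                 (real (n - 1) \<cdot>\<^sub>m 1\<^sub>m (n - 1) - ones_mat (n - 1)))"
  defines "Y \<equiv> ones_mat (n - 1) + C\<^sup>T * X"
  defines "d \<equiv> (\<lambda>j::nat.
     if j = 0 then
       1/5 + 4 * real (n - 1) / sqrt 5 *
         ((2 ^ (n - 2) + (-3 + sqrt 5) ^ (n - 2)) / (2 ^ (n - 1) - (-3 + sqrt 5) ^ (n - 1))
          - (2 ^ (n - 2) + (-3 - sqrt 5) ^ (n - 2)) / (2 ^ (n - 1) - (-3 - sqrt 5) ^ (n - 1)))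
     else
       1/5 + 2 ^ (n + 1 - j) * real (n - 1) / (5 + sqrt 5) *
         (2 * (-3 + sqrt 5) ^ (j - 1) / (2 ^ (n - 1) - (-3 + sqrt 5) ^ (n - 1))
          - (-3 - sqrt 5) ^ j / (2 ^ (n - 1) - (-3 - sqrt 5) ^ (n - 1))))"
  shows "Y = circ (n - 1) d"
proof -
  define m where "m = n - 1"
  have m: "3 \<le> m" "n - 1 = m" "n - 2 = m - 1" "n + 1 = m + 2" using assms(1) by (simp_all add: m_def)
  have C: "C = cycle_mat m" unfolding C_def cycle_mat_def m ..
  have "Y = ones_mat m + (cycle_mat m)\<^sup>T * circ m (X_coeff m)"
    using cycle_gram_inverse_mult m(1) unfolding Y_def X_def C m by simp
  also have "\<dots> = circ m (\<lambda>t. 1 + X_coeff m t + X_coeff m ((t + m - 1) mod m))"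
    using m(1) by (simp add: ones_mat_circ transpose_cycle_mat_mult_circ circ_add add.assoc)
  also have "\<dots> = circ (n - 1) d"
    unfolding m(2)
  proof (rule circ_cong)
    fix t assume "t < m"
    show "1 + X_coeff m t + X_coeff m ((t + m - 1) mod m) = d t"
    proof (cases "t = 0")
      case True
      then show ?thesis using closed_form_entry_0 m by (simp add: d_def)
    next
      case False
      then have "(t + m - 1) mod m = t - 1" using \<open>t < m\<close> cyclic_pred_pos by blast
      then show ?thesis using closed_form_entry[of t m] False \<open>t < m\<close> m by (simp add: d_def)
    qed
  qed
  finally show ?thesis .
qed

end
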